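(* Let $A,B$ be noncommuting matrices in $\mathrm{SL}_2\mathbb{R}$, both with trace $\ge 2$. Then the pair $A,B$ is coherently oriented if and only if there exists $C\in\mathrm{SL}_2\mathbb{R}$ such that $CAC^{-1}$ and $CBC^{-1}$ have nonnegative entries.
   Context: $\mathrm{SL}_2\mathbb{R}$ acts on $\partial\mathcal{H}=\mathbb{P}^1\mathbb{R}$ by Möbius transformations $\begin{pmatrix}a&b\\c&d\end{pmatrix}*z=(az+b)/(cz+d)$. For a hyperbolic matrix $A$ (trace $>2$), $\alpha^+$ and $\alpha^-$ denote its attracting and repelling fixed points in $\partial\mathcal{H}$; for a parabolic $A$ (trace $2$, $A\neq I$), $\alpha^+=\alpha^-$ is its unique fixed point; similarly $\beta^\pm$ for $B$. The circle $\partial\mathcal{H}$ is cyclically (counterclockwise) ordered, and for distinct $\alpha,\beta$ the closed interval $[\alpha,\beta]$ consists of $\alpha,\beta$ and the points met travelling counterclockwise from $\alpha$ to $\beta$. If $\alpha^+=\beta^+$ let $I^+=\{\alpha^+\}$; otherwise $I^+$ is the one of the intervals $[\alpha^+,\beta^+]$, $[\beta^+,\alpha^+]$ mapped into itself by both $A$ and $B$, if such exists (else undefined). $I^-$ is defined likewise using $A^{-1},B^{-1}$ and $\alpha^-,\beta^-$. The pair $A,B$ is coherently oriented if both $I^+$ and $I^-$ are defined. *)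

theory Defs
  imports "HOL-Analysis.Analysis"
begin

text \<open>Model of the boundary circle P^1(R) = R \<union> {\<infinity>}: Some x is the real point x,
  None is \<infinity>. Matrices in SL_2(R) are elements of real^2^2 with determinant 1.\<close>

definition proj_pt :: "real^2 \<Rightarrow> real option" where
  "proj_pt v = (if v$2 = 0 then None else Some (v$1 / v$2))"

definition mob :: "real^2^2 \<Rightarrow> real option \<Rightarrow> real option" where
  "mob M z = (case z of
      None \<Rightarrow> (if M$2$1 = 0 then None else Some (M$1$1 / M$2$1))
    | Some x \<Rightarrow> (if M$2$1 * x + M$2$2 = 0 then None
                 else Some ((M$1$1 * x + M$1$2) / (M$2$1 * x + M$2$2))))"

definition attr_pt :: "real^2^2 \<Rightarrow> real option \<Rightarrow> bool" where
  "attr_pt M p \<longleftrightarrow>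
     (trace M > 2 \<and> (\<exists>v l. v \<noteq> 0 \<and> l > 1 \<and> M *v v = l *\<^sub>R v \<and> p = proj_pt v))
   \<or> (trace M = 2 \<and> M \<noteq> mat 1 \<and> mob M p = p)"

definition rep_pt :: "real^2^2 \<Rightarrow> real option \<Rightarrow> bool" where
  "rep_pt M p \<longleftrightarrow> attr_pt (matrix_inv M) p"

text \<open>Order on R \<union> {\<infinity>} with \<infinity> as largest element; counterclockwise travel on the
  boundary of the upper half plane is increasing order on R, then \<infinity>.\<close>
fun le_ext :: "real option \<Rightarrow> real option \<Rightarrow> bool" where
  "le_ext _ None = True"
| "le_ext None (Some _) = False"
| "le_ext (Some x) (Some y) = (x \<le> y)"

text \<open>Closed counterclockwise interval [a,b] for distinct a, b.\<close>
definition cint :: "real option \<Rightarrow> real option \<Rightarrow> real option set" where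
  "cint a b = (if le_ext a b then {z. le_ext a z \<and> le_ext z b}
               else {z. le_ext a z \<or> le_ext z b})"

definition interval_defined ::
  "real^2^2 \<Rightarrow> real^2^2 \<Rightarrow> real option \<Rightarrow> real option \<Rightarrow> bool" where
  "interval_defined M N a b \<longleftrightarrow>
     a = b \<or>
     (mob M ` cint a b \<subseteq> cint a b \<and> mob N ` cint a b \<subseteq> cint a b) \<or>
     (mob M ` cint b a \<subseteq> cint b a \<and> mob N ` cint b a \<subseteq> cint b a)"

definition coherently_oriented :: "real^2^2 \<Rightarrow> real^2^2 \<Rightarrow> bool" where
  "coherently_oriented A B \<longleftrightarrow>
     (\<exists>ap bp. attr_pt A ap \<and> attr_pt B bp \<and> interval_defined A B ap bp) \<and>
     (\<exists>am bm. rep_pt A am \<and> rep_pt B bm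
        \<and> interval_defined (matrix_inv A) (matrix_inv B) am bm)"

end

(*
  A nonnegative matrix of SL2(R) maps the arc [0, \<infinity>] of the boundary circle into itself, and
  conversely a matrix of positive trace mapping this arc into itself has nonnegative entries
  (otherwise a suitable point of [0, \<infinity>) is sent to a negative number).  Since SL2(R) acts
  transitively on pairs of distinct boundary points and preserves the cyclic order, A and B are
  simultaneously conjugate to nonnegative matrices iff they both map some arc with distinct
  endpoints into itself.

  If I+ is defined by distinct attracting points, its arc is such an arc.  If the attracting
  points coincide, the repelling points differ (else A and B would commute), and I- gives such
  an arc for the inverses.  This suffices, because conjugation by the quarter turn z \<mapsto> -1/z
  sends the inverse of an SL2 matrix to its transpose.

  Conversely, the attracting point of a nonnegative matrix M lies in [0, \<infinity>], M moves the
  points of [0, \<infinity>] below it up and the points above it down, and M is monotone on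
  [0, \<infinity>].  Hence the arc between the attracting points of nonnegative A and B is mapped
  into itself by both; the transposes take care of the repelling points.
*)

theory Submission
  imports Defs
begin

section \<open>Inverses and conjugates of matrices\<close>

lemma matrix_inv_unique:
  fixes M X :: "'a::field^'n^'n"
  assumes "M ** X = mat 1"
  shows "matrix_inv M = X"
proof -
  have "X ** M = mat 1" using assms matrix_left_right_inverse by blast
  then have inv: "M ** matrix_inv M = mat 1 \<and> matrix_inv M ** M = mat 1"
    unfolding matrix_inv_def using assms
    by (intro someI[where P = "\<lambda>X'. M ** X' = mat 1 \<and> X' ** M = mat 1"]) simp
  have "matrix_inv M = matrix_inv M ** (M ** X)" by (simp add: assms)
  also have "\<dots> = X" by (simp add: matrix_mul_assoc inv)
  finally show ?thesis .
qed

lemma matrix_inv_right: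
  fixes M :: "'a::field^'n^'n"
  assumes "det M \<noteq> 0"
  shows "M ** matrix_inv M = mat 1"
proof -
  obtain X where "M ** X = mat 1"
    using assms invertible_det_nz invertible_right_inverse by blast
  then show ?thesis using matrix_inv_unique by metis
qed

lemma matrix_inv_left:
  fixes M :: "'a::field^'n^'n"
  assumes "det M \<noteq> 0"
  shows "matrix_inv M ** M = mat 1"
  using matrix_inv_right[OF assms] matrix_left_right_inverse by blast

lemma det_matrix_inv:
  fixes M :: "'a::field^'n^'n"
  assumes "det M \<noteq> 0"
  shows "det (matrix_inv M) = inverse (det M)"
proof -
  have "det M * det (matrix_inv M) = 1"
    by (metis matrix_inv_right[OF assms] det_I det_mul)
  then show ?thesis using assms by (simp add: field_simps)
qed

lemma matrix_inv_matrix_mul: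
  fixes M N :: "'a::field^'n^'n"
  assumes "det M \<noteq> 0" "det N \<noteq> 0"
  shows "matrix_inv (M ** N) = matrix_inv N ** matrix_inv M"
proof (rule matrix_inv_unique)
  have "M ** N ** (matrix_inv N ** matrix_inv M) = M ** (N ** matrix_inv N) ** matrix_inv M"
    by (simp add: matrix_mul_assoc)
  then show "M ** N ** (matrix_inv N ** matrix_inv M) = mat 1"
    by (simp add: matrix_inv_right assms)
qed

lemma matrix_inv_inv:
  fixes M :: "'a::field^'n^'n"
  assumes "det M \<noteq> 0"
  shows "matrix_inv (matrix_inv M) = M"
  by (rule matrix_inv_unique) (rule matrix_inv_left[OF assms])

lemma matrix_inv_conj:
  fixes D M :: "'a::field^'n^'n"
  assumes "det D \<noteq> 0" "det M \<noteq> 0"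
  shows "matrix_inv (D ** M ** matrix_inv D) = D ** matrix_inv M ** matrix_inv D"
proof (rule matrix_inv_unique)
  have "D ** M ** matrix_inv D ** (D ** matrix_inv M ** matrix_inv D)
      = D ** M ** (matrix_inv D ** D) ** matrix_inv M ** matrix_inv D"
    by (simp add: matrix_mul_assoc)
  also have "\<dots> = D ** (M ** matrix_inv M) ** matrix_inv D"
    by (simp add: matrix_inv_left assms matrix_mul_assoc)
  finally show "D ** M ** matrix_inv D ** (D ** matrix_inv M ** matrix_inv D) = mat 1"
    by (simp add: matrix_inv_right assms)
qed

lemma conj_matrix_mul:
  fixes D E M :: "'a::field^'n^'n"
  assumes "det D \<noteq> 0" "det E \<noteq> 0"
  shows "D ** (E ** M ** matrix_inv E) ** matrix_inv D = (D ** E) ** M ** matrix_inv (D ** E)"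
  using assms by (simp add: matrix_inv_matrix_mul matrix_mul_assoc)

lemma conj_cancel:
  fixes D M :: "'a::field^'n^'n"
  assumes "det D \<noteq> 0"
  shows "matrix_inv D ** (D ** M ** matrix_inv D) ** D = M"
proof -
  have "matrix_inv D ** (D ** M ** matrix_inv D) ** D
      = (matrix_inv D ** D) ** M ** (matrix_inv D ** D)"
    by (simp add: matrix_mul_assoc)
  then show ?thesis by (simp add: matrix_inv_left assms)
qed

lemma conj_eq_mat_1_iff:
  fixes D M :: "'a::field^'n^'n"
  assumes "det D \<noteq> 0"
  shows "D ** M ** matrix_inv D = mat 1 \<longleftrightarrow> M = mat 1"
  using conj_cancel[OF assms, of M] by (auto simp: matrix_inv_right matrix_inv_left assms)

lemma matrix_inv_eq_mat_1_iff:
  fixes M :: "'a::field^'n^'n"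
  assumes "det M \<noteq> 0"
  shows "matrix_inv M = mat 1 \<longleftrightarrow> M = mat 1"
  using matrix_inv_inv[OF assms] matrix_inv_unique[of "mat 1" "mat 1"] by force

lemma trace_conj:
  fixes D M :: "'a::field^'n^'n"
  assumes "det D \<noteq> 0"
  shows "trace (D ** M ** matrix_inv D) = trace M"
proof -
  have "trace (D ** M ** matrix_inv D) = trace (matrix_inv D ** (D ** M))"
    by (rule trace_mul_sym)
  also have "\<dots> = trace M" by (simp add: matrix_mul_assoc matrix_inv_left assms)
  finally show ?thesis .
qed

lemma det_conj:
  fixes D M :: "'a::field^'n^'n"
  assumes "det D \<noteq> 0"
  shows "det (D ** M ** matrix_inv D) = det M"
  using assms by (simp add: det_mul det_matrix_inv)

lemma matrix_vector_mult_nonzero: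
  fixes M :: "'a::field^'n^'n"
  assumes "det M \<noteq> 0" "v \<noteq> 0"
  shows "M *v v \<noteq> 0"
proof
  assume "M *v v = 0"
  then have "matrix_inv M *v (M *v v) = 0" by simp
  then show False using assms by (simp add: matrix_vector_mul_assoc matrix_inv_left)
qed

section \<open>Two by two matrices\<close>

lemma matrix_matrix_mult_2_nth:
  "((M::'a::comm_semiring_1^2^2) ** N) $ i $ j = M$i$1 * N$1$j + M$i$2 * N$2$j"
  by (simp add: matrix_matrix_mult_def sum_2)

lemma matrix_vector_mult_2_nth:
  "((M::'a::comm_semiring_1^2^2) *v v) $ i = M$i$1 * v$1 + M$i$2 * v$2"
  by (simp add: matrix_vector_mult_def sum_2)

lemma trace_2: "trace (M::'a::semiring_1^2^2) = M$1$1 + M$2$2"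
  by (simp add: trace_def sum_2)

lemma mat_1_2_nth: "(mat 1 :: 'a::zero_neq_one^2^2) $ i $ j = (if i = j then 1 else 0)"
  by (simp add: mat_def)

lemma vec2_eq_iff: "(u::'a^2) = v \<longleftrightarrow> u$1 = v$1 \<and> u$2 = v$2"
  by (simp add: vec_eq_iff forall_2)

lemma mat2_eq_iff:
  "(M::'a^2^2) = N \<longleftrightarrow> M$1$1 = N$1$1 \<and> M$1$2 = N$1$2 \<and> M$2$1 = N$2$1 \<and> M$2$2 = N$2$2"
  by (simp add: vec_eq_iff forall_2)

definition vec2 :: "'a \<Rightarrow> 'a \<Rightarrow> 'a^2" where
  "vec2 x y = (\<chi> i. if i = 1 then x else y)"

lemma vec2_nth [simp]: "vec2 x y $ 1 = x" "vec2 x y $ 2 = y"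
  by (simp_all add: vec2_def)

definition mat2 :: "'a \<Rightarrow> 'a \<Rightarrow> 'a \<Rightarrow> 'a \<Rightarrow> 'a^2^2" where
  "mat2 a b c d = (\<chi> i j. if i = 1 then (if j = 1 then a else b) else (if j = 1 then c else d))"

lemma mat2_nth [simp]:
  "mat2 a b c d $ 1 $ 1 = a" "mat2 a b c d $ 1 $ 2 = b"
  "mat2 a b c d $ 2 $ 1 = c" "mat2 a b c d $ 2 $ 2 = d"
  by (simp_all add: mat2_def)

lemma mat2_eta: "M = mat2 (M$1$1) (M$1$2) (M$2$1) (M$2$2)"
  by (simp add: mat2_eq_iff)

lemma matrix_inv_sl2:
  fixes M :: "real^2^2"
  assumes "det M = 1"
  shows "matrix_inv M = mat2 (M$2$2) (- M$1$2) (- M$2$1) (M$1$1)"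
  by (rule matrix_inv_unique)
    (use assms in \<open>simp add: mat2_eq_iff matrix_matrix_mult_2_nth mat_1_2_nth det_2 algebra_simps\<close>)

lemma trace_matrix_inv_sl2:
  fixes M :: "real^2^2"
  assumes "det M = 1"
  shows "trace (matrix_inv M) = trace M"
  by (simp add: matrix_inv_sl2 assms trace_2)

section \<open>The Moebius action on the boundary circle\<close>

definition lift_pt :: "real option \<Rightarrow> real^2" where
  "lift_pt p = (case p of None \<Rightarrow> vec2 1 0 | Some x \<Rightarrow> vec2 x 1)"

lemma lift_pt_simps [simp]: "lift_pt None = vec2 1 0" "lift_pt (Some x) = vec2 x 1"
  by (simp_all add: lift_pt_def)

lemma proj_pt_lift_pt [simp]: "proj_pt (lift_pt p) = p"
  by (cases p) (simp_all add: proj_pt_def)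

lemma lift_pt_nonzero [simp]: "lift_pt p \<noteq> 0"
  by (cases p) (simp_all add: vec2_eq_iff)

lemma proj_pt_scaleR: "\<mu> \<noteq> 0 \<Longrightarrow> proj_pt (\<mu> *\<^sub>R v) = proj_pt v"
  by (simp add: proj_pt_def)

lemma scaleR_lift_pt_proj_pt:
  fixes v :: "real^2"
  assumes "v \<noteq> 0"
  obtains \<mu> where "\<mu> \<noteq> 0" "v = \<mu> *\<^sub>R lift_pt (proj_pt v)"
proof (cases "v$2 = 0")
  case True
  then have "v$1 \<noteq> 0" using assms by (simp add: vec2_eq_iff)
  then show ?thesis using True that[of "v$1"] by (simp add: proj_pt_def vec2_eq_iff)
next
  case False
  then show ?thesis using that[of "v$2"] by (simp add: proj_pt_def vec2_eq_iff)
qed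

lemma proj_pt_eq_imp_parallel:
  fixes u w :: "real^2"
  assumes "u \<noteq> 0" "w \<noteq> 0" "proj_pt u = proj_pt w"
  obtains \<mu> where "\<mu> \<noteq> 0" "u = \<mu> *\<^sub>R w"
proof -
  obtain a where a: "a \<noteq> 0" "u = a *\<^sub>R lift_pt (proj_pt w)"
    using scaleR_lift_pt_proj_pt[OF assms(1)] assms(3) by metis
  obtain b where b: "b \<noteq> 0" "w = b *\<^sub>R lift_pt (proj_pt w)"
    using scaleR_lift_pt_proj_pt[OF assms(2)] by metis
  have "u = (a / b) *\<^sub>R w" using a b by (metis divide_eq_0_iff nonzero_divide_eq_eq scaleR_scaleR)
  then show ?thesis using a b that[of "a / b"] by simp
qed

lemma mob_eq_proj_pt: "mob M p = proj_pt (M *v lift_pt p)"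
  by (cases p) (simp_all add: mob_def proj_pt_def matrix_vector_mult_2_nth add.commute)

lemma mob_proj_pt:
  fixes M :: "real^2^2"
  assumes "det M \<noteq> 0" "v \<noteq> 0"
  shows "mob M (proj_pt v) = proj_pt (M *v v)"
proof -
  obtain a where "a \<noteq> 0" "v = a *\<^sub>R lift_pt (proj_pt v)"
    using scaleR_lift_pt_proj_pt[OF assms(2)] by metis
  then show ?thesis
    by (metis matrix_vector_mult_scaleR mob_eq_proj_pt proj_pt_scaleR)
qed

lemma mob_matrix_mul:
  fixes M N :: "real^2^2"
  assumes "det M \<noteq> 0" "det N \<noteq> 0"
  shows "mob (M ** N) p = mob M (mob N p)"
proof -
  have "mob (M ** N) p = proj_pt (M *v (N *v lift_pt p))"
    by (simp add: mob_eq_proj_pt matrix_vector_mul_assoc)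
  also have "\<dots> = mob M (proj_pt (N *v lift_pt p))"
    by (rule mob_proj_pt[symmetric]) (simp_all add: assms matrix_vector_mult_nonzero)
  finally show ?thesis by (simp add: mob_eq_proj_pt)
qed

lemma mob_mat_1 [simp]: "mob (mat 1) p = p"
  by (simp add: mob_eq_proj_pt)

lemma mob_matrix_inv_left:
  fixes M :: "real^2^2"
  assumes "det M \<noteq> 0"
  shows "mob (matrix_inv M) (mob M p) = p"
  using mob_matrix_mul[of "matrix_inv M" M p] assms by (simp add: det_matrix_inv matrix_inv_left)

lemma mob_matrix_inv_right:
  fixes M :: "real^2^2"
  assumes "det M \<noteq> 0"
  shows "mob M (mob (matrix_inv M) p) = p"
  using mob_matrix_mul[of M "matrix_inv M" p] assms by (simp add: det_matrix_inv matrix_inv_right)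

lemma mob_conj:
  fixes D M :: "real^2^2"
  assumes "det D \<noteq> 0" "det M \<noteq> 0"
  shows "mob (D ** M ** matrix_inv D) (mob D p) = mob D (mob M p)"
  using assms by (simp add: mob_matrix_mul det_mul det_matrix_inv mob_matrix_inv_left)

section \<open>Cyclic order\<close>

definition cross2 :: "real^2 \<Rightarrow> real^2 \<Rightarrow> real" where
  "cross2 u w = u$1 * w$2 - u$2 * w$1"

lemma cross2_matrix_vector_mult: "cross2 (M *v u) (M *v w) = det M * cross2 u w"
  by (simp add: cross2_def matrix_vector_mult_2_nth det_2 algebra_simps)

lemma cross2_scaleR: "cross2 (a *\<^sub>R u) (b *\<^sub>R w) = a * b * cross2 u w"
  by (simp add: cross2_def algebra_simps)

lemma cross2_lift_pt_eq_0_iff: "cross2 (lift_pt p) (lift_pt q) = 0 \<longleftrightarrow> p = q"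
  by (cases p; cases q) (simp_all add: cross2_def)

definition cyc_orient :: "real option \<Rightarrow> real option \<Rightarrow> real option \<Rightarrow> real" where
  "cyc_orient a z b =
     cross2 (lift_pt a) (lift_pt z) * cross2 (lift_pt z) (lift_pt b)
       * cross2 (lift_pt b) (lift_pt a)"

lemma cyc_orient_mob_nonneg_iff:
  fixes M :: "real^2^2"
  assumes "det M > 0"
  shows "0 \<le> cyc_orient (mob M a) (mob M z) (mob M b) \<longleftrightarrow> 0 \<le> cyc_orient a z b"
proof -
  have lift_mob: "\<exists>\<mu>. \<mu> \<noteq> 0 \<and> M *v lift_pt p = \<mu> *\<^sub>R lift_pt (mob M p)" for p
    using scaleR_lift_pt_proj_pt[of "M *v lift_pt p"] assms
    by (metis less_irrefl lift_pt_nonzero matrix_vector_mult_nonzero mob_eq_proj_pt)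
  obtain x y w where "x \<noteq> 0" and x: "M *v lift_pt a = x *\<^sub>R lift_pt (mob M a)"
    and "y \<noteq> 0" and y: "M *v lift_pt z = y *\<^sub>R lift_pt (mob M z)"
    and "w \<noteq> 0" and w: "M *v lift_pt b = w *\<^sub>R lift_pt (mob M b)"
    using lift_mob by metis
  have "det M ^ 3 * cyc_orient a z b = cross2 (M *v lift_pt a) (M *v lift_pt z)
      * cross2 (M *v lift_pt z) (M *v lift_pt b) * cross2 (M *v lift_pt b) (M *v lift_pt a)"
    by (simp add: cyc_orient_def cross2_matrix_vector_mult power3_eq_cube algebra_simps)
  \<comment> \<open>each lift occurs in two factors, so the rescalings enter squared\<close>
  also have "\<dots> = (x * y * w)\<^sup>2 * cyc_orient (mob M a) (mob M z) (mob M b)"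
    unfolding x y w cross2_scaleR cyc_orient_def by (simp add: power2_eq_square algebra_simps)
  finally have "det M ^ 3 * cyc_orient a z b
      = (x * y * w)\<^sup>2 * cyc_orient (mob M a) (mob M z) (mob M b)" .
  moreover have "det M ^ 3 > 0" "(x * y * w)\<^sup>2 > 0"
    using assms \<open>x \<noteq> 0\<close> \<open>y \<noteq> 0\<close> \<open>w \<noteq> 0\<close> by simp_all
  ultimately show ?thesis by (metis zero_le_mult_iff not_less less_eq_real_def)
qed

lemma nonneg_triple_product_iff:
  fixes x y w :: real
  assumes "x \<noteq> y"
  shows "0 \<le> (x - w) * (w - y) * (y - x) \<longleftrightarrow>
    (if x \<le> y then x \<le> w \<and> w \<le> y else x \<le> w \<or> w \<le> y)"
  using assms by (cases "x < y") (auto simp: zero_le_mult_iff mult_le_0_iff)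

lemma cint_iff_cyc_orient:
  assumes "a \<noteq> b"
  shows "z \<in> cint a b \<longleftrightarrow> 0 \<le> cyc_orient a z b"
  using assms nonneg_triple_product_iff
  by (cases a; cases b; cases z) (auto simp: cint_def cyc_orient_def cross2_def)

lemma mob_cint:
  fixes M :: "real^2^2"
  assumes "det M > 0" "a \<noteq> b"
  shows "mob M ` cint a b = cint (mob M a) (mob M b)"
proof -
  have M: "det M \<noteq> 0" using assms by simp
  then have "mob M a \<noteq> mob M b" using assms(2) by (metis mob_matrix_inv_left)
  then have "mob M z \<in> cint (mob M a) (mob M b) \<longleftrightarrow> z \<in> cint a b" for z
    using assms by (simp add: cint_iff_cyc_orient cyc_orient_mob_nonneg_iff)
  then show ?thesis
    using M by (metis (no_types, lifting) mob_matrix_inv_right image_iff subset_antisym subsetI)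
qed

lemma attr_pt_conj:
  fixes D M :: "real^2^2"
  assumes "det D \<noteq> 0" "det M \<noteq> 0" "attr_pt M p"
  shows "attr_pt (D ** M ** matrix_inv D) (mob D p)"
proof -
  have tr: "trace (D ** M ** matrix_inv D) = trace M" by (rule trace_conj[OF assms(1)])
  from assms(3) consider
      (hyperbolic) v l where "trace M > 2" "v \<noteq> 0" "l > 1" "M *v v = l *\<^sub>R v" "p = proj_pt v"
    | (parabolic) "trace M = 2" "M \<noteq> mat 1" "mob M p = p"
    unfolding attr_pt_def by blast
  then show ?thesis
  proof cases
    case hyperbolic
    have "(D ** M ** matrix_inv D) *v (D *v v) = D *v (M *v ((matrix_inv D ** D) *v v))"
      by (simp add: matrix_vector_mul_assoc matrix_mul_assoc)
    also have "\<dots> = l *\<^sub>R (D *v v)"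
      using hyperbolic assms by (simp add: matrix_inv_left matrix_vector_mult_scaleR)
    finally show ?thesis
      using hyperbolic tr assms matrix_vector_mult_nonzero[OF assms(1)]
      unfolding attr_pt_def by (metis mob_proj_pt)
  qed (use tr assms conj_eq_mat_1_iff mob_conj in \<open>auto simp: attr_pt_def\<close>)
qed

lemma conj_invariant_cint:
  fixes D M :: "real^2^2"
  assumes "det D > 0" "det M \<noteq> 0" "a \<noteq> b" "mob M ` cint a b \<subseteq> cint a b"
  shows "mob (D ** M ** matrix_inv D) ` cint (mob D a) (mob D b) \<subseteq> cint (mob D a) (mob D b)"
proof -
  have "mob (D ** M ** matrix_inv D) ` mob D ` cint a b = mob D ` mob M ` cint a b"
    using mob_conj[of D M] assms(1,2) by (simp add: image_image)
  then show ?thesis using assms by (simp add: mob_cint[symmetric] image_mono)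
qed

lemma interval_defined_conj:
  fixes D M N :: "real^2^2"
  assumes "det D > 0" "det M \<noteq> 0" "det N \<noteq> 0" "interval_defined M N a b"
  shows "interval_defined (D ** M ** matrix_inv D) (D ** N ** matrix_inv D) (mob D a) (mob D b)"
  using assms conj_invariant_cint unfolding interval_defined_def by metis

definition attracting_interval_defined :: "real^2^2 \<Rightarrow> real^2^2 \<Rightarrow> bool" where
  "attracting_interval_defined M N \<longleftrightarrow>
     (\<exists>p q. attr_pt M p \<and> attr_pt N q \<and> interval_defined M N p q)"

lemma coherently_oriented_iff:
  "coherently_oriented A B \<longleftrightarrow>
     attracting_interval_defined A B \<and> attracting_interval_defined (matrix_inv A) (matrix_inv B)"
  by (simp add: coherently_oriented_def attracting_interval_defined_def rep_pt_def)

lemma attracting_interval_defined_conj: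
  fixes D M N :: "real^2^2"
  assumes "det D > 0" "det M \<noteq> 0" "det N \<noteq> 0" "attracting_interval_defined M N"
  shows "attracting_interval_defined (D ** M ** matrix_inv D) (D ** N ** matrix_inv D)"
  using assms attr_pt_conj interval_defined_conj unfolding attracting_interval_defined_def
  by (metis less_irrefl)

section \<open>Attracting fixed points\<close>

lemma sl2_eigenvector_exists:
  fixes M :: "real^2^2"
  assumes "det M = 1" "l\<^sup>2 - trace M * l + 1 = 0"
  obtains v where "v \<noteq> 0" "M *v v = l *\<^sub>R v"
proof -
  have char: "(l - M$1$1) * (l - M$2$2) = M$1$2 * M$2$1"
    using assms unfolding det_2 trace_2 by algebra
  consider "M$1$2 \<noteq> 0" | "M$1$2 = 0" "M$2$1 \<noteq> 0" | "M$1$2 = 0" "M$2$1 = 0" "l = M$1$1"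
    | "M$1$2 = 0" "M$2$1 = 0" "l = M$2$2"
    using char by force
  then show ?thesis
  proof cases
    case 1
    then show ?thesis using that[of "vec2 (M$1$2) (l - M$1$1)"] char
      by (simp add: vec2_eq_iff matrix_vector_mult_2_nth algebra_simps)
  next
    case 2
    then show ?thesis using that[of "vec2 (l - M$2$2) (M$2$1)"] char
      by (simp add: vec2_eq_iff matrix_vector_mult_2_nth algebra_simps)
  next
    case 3
    then show ?thesis using that[of "vec2 1 0"] by (simp add: vec2_eq_iff matrix_vector_mult_2_nth)
  next
    case 4
    then show ?thesis using that[of "vec2 0 1"] by (simp add: vec2_eq_iff matrix_vector_mult_2_nth)
  qed
qed

lemma sl2_eigenvalue_char_eq:
  fixes M :: "real^2^2"
  assumes "det M = 1" "v \<noteq> 0" "M *v v = l *\<^sub>R v"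
  shows "l\<^sup>2 - trace M * l + 1 = 0"
proof -
  have "M$1$1 * v$1 + M$1$2 * v$2 = l * v$1" "M$2$1 * v$1 + M$2$2 * v$2 = l * v$2"
    using assms(3) by (simp_all add: vec2_eq_iff matrix_vector_mult_2_nth)
  moreover have "M$1$1 * M$2$2 - M$1$2 * M$2$1 = 1" using assms(1) by (simp add: det_2)
  ultimately have "(l\<^sup>2 - trace M * l + 1) * v$1 = 0" "(l\<^sup>2 - trace M * l + 1) * v$2 = 0"
    unfolding trace_2 by algebra+
  then show ?thesis using assms(2) by (auto simp: vec2_eq_iff)
qed

lemma attr_pt_eigenvector:
  fixes M :: "real^2^2"
  assumes "det M = 1" "attr_pt M p"
  obtains v l where "v \<noteq> 0" "l \<ge> 1" "M *v v = l *\<^sub>R v" "p = proj_pt v"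
    "l\<^sup>2 - trace M * l + 1 = 0"
proof -
  from assms(2) consider
      (hyperbolic) v l where "v \<noteq> 0" "l > 1" "M *v v = l *\<^sub>R v" "p = proj_pt v"
    | (parabolic) "trace M = 2" "mob M p = p"
    unfolding attr_pt_def by blast
  then show ?thesis
  proof cases
    case hyperbolic
    then show ?thesis using that[of v l] sl2_eigenvalue_char_eq[OF assms(1) hyperbolic(1,3)] by simp
  next
    case parabolic
    have "M *v lift_pt p \<noteq> 0" using assms by (simp add: matrix_vector_mult_nonzero)
    moreover have "proj_pt (M *v lift_pt p) = proj_pt (lift_pt p)"
      using parabolic by (simp add: mob_eq_proj_pt)
    ultimately obtain \<mu> where \<mu>: "M *v lift_pt p = \<mu> *\<^sub>R lift_pt p"
      using proj_pt_eq_imp_parallel lift_pt_nonzero by metis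
    have "(\<mu> - 1)\<^sup>2 = 0"
      using sl2_eigenvalue_char_eq[OF assms(1) lift_pt_nonzero \<mu>] parabolic
      by (simp add: power2_eq_square algebra_simps)
    then show ?thesis using that[of "lift_pt p" 1] parabolic \<mu> by simp
  qed
qed

lemma trace_mat_1_2: "trace (mat 1 :: real^2^2) = 2"
  by (simp add: trace_2 mat_1_2_nth)

lemma attr_pt_imp_neq_mat_1: "attr_pt M p \<Longrightarrow> M \<noteq> mat 1"
  using trace_mat_1_2 unfolding attr_pt_def by auto

lemma attr_pt_exists:
  fixes M :: "real^2^2"
  assumes "det M = 1" "trace M \<ge> 2" "M \<noteq> mat 1"
  obtains p where "attr_pt M p"
proof (cases "trace M > 2")
  case True
  define s where "s = sqrt ((trace M)\<^sup>2 - 4)"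
  define l where "l = (trace M + s) / 2"
  have "2 * 2 < trace M * trace M" using True mult_strict_mono[of 2 "trace M" 2 "trace M"] by simp
  then have s: "s\<^sup>2 = (trace M)\<^sup>2 - 4" "s \<ge> 0" by (simp_all add: s_def power2_eq_square)
  then have "l > 1" using True by (simp add: l_def)
  moreover have "l\<^sup>2 - trace M * l + 1 = 0"
    using s(1) by (simp add: l_def power2_eq_square field_simps)
  ultimately show ?thesis
    using sl2_eigenvector_exists[OF assms(1)] True that unfolding attr_pt_def by metis
next
  case False
  then have "trace M = 2" using assms by simp
  then obtain v where "v \<noteq> 0" "M *v v = v"
    using sl2_eigenvector_exists[OF assms(1), of 1] by auto
  then have "mob M (proj_pt v) = proj_pt v" using assms by (simp add: mob_proj_pt)
  then show ?thesis using \<open>trace M = 2\<close> assms that unfolding attr_pt_def by blast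
qed

lemma mob_attr_pt:
  fixes M :: "real^2^2"
  assumes "det M \<noteq> 0" "attr_pt M p"
  shows "mob M p = p"
  using assms unfolding attr_pt_def by (auto simp: mob_proj_pt proj_pt_scaleR)

lemma eigenvector_parallel:
  fixes M :: "real^2^2"
  assumes "u \<noteq> 0" "w \<noteq> 0" "proj_pt u = proj_pt w" "M *v w = l *\<^sub>R w"
  shows "M *v u = l *\<^sub>R u"
proof -
  obtain \<mu> where "u = \<mu> *\<^sub>R w" using proj_pt_eq_imp_parallel[OF assms(1-3)] by metis
  then show ?thesis using assms(4) by (simp add: matrix_vector_mult_scaleR)
qed

lemma eigenvector_matrix_inv:
  fixes M :: "real^2^2"
  assumes "det M \<noteq> 0" "matrix_inv M *v w = m *\<^sub>R w" "m \<noteq> 0"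
  shows "M *v w = inverse m *\<^sub>R w"
proof -
  have "w = M *v (matrix_inv M *v w)"
    using assms(1) by (simp add: matrix_vector_mul_assoc matrix_inv_right)
  also have "\<dots> = m *\<^sub>R (M *v w)" using assms(2) by (simp add: matrix_vector_mult_scaleR)
  finally have "inverse m *\<^sub>R w = inverse m *\<^sub>R m *\<^sub>R (M *v w)" by simp
  then show ?thesis using assms(3) by simp
qed

lemma cross2_eq_0_imp_proj_pt_eq:
  assumes "u \<noteq> 0" "w \<noteq> 0" "cross2 u w = 0"
  shows "proj_pt u = proj_pt w"
  using assms by (auto simp: proj_pt_def cross2_def vec2_eq_iff field_simps)

lemma commute_if_common_eigenbasis:
  fixes A B :: "real^2^2"
  assumes "A *v u = \<alpha> *\<^sub>R u" "A *v w = \<beta> *\<^sub>R w" "B *v u = \<gamma> *\<^sub>R u" "B *v w = \<delta> *\<^sub>R w"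
    and "cross2 u w \<noteq> 0"
  shows "A ** B = B ** A"
proof -
  define P where "P = mat2 (u$1) (w$1) (u$2) (w$2)"
  have P: "det P \<noteq> 0" using assms(5) by (simp add: P_def det_2 cross2_def mult.commute)
  have AP: "A ** P = P ** mat2 \<alpha> 0 0 \<beta>" and BP: "B ** P = P ** mat2 \<gamma> 0 0 \<delta>"
    using assms(1-4)
    by (simp_all add: P_def mat2_eq_iff matrix_matrix_mult_2_nth vec2_eq_iff
        matrix_vector_mult_2_nth mult.commute)
  have diag: "mat2 \<alpha> 0 0 \<beta> ** mat2 \<gamma> 0 0 \<delta> = mat2 \<gamma> 0 0 \<delta> ** mat2 \<alpha> 0 0 \<beta>"
    by (simp add: mat2_eq_iff matrix_matrix_mult_2_nth mult.commute)
  have "A ** B ** P = B ** A ** P"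
    by (simp add: BP flip: matrix_mul_assoc, simp add: matrix_mul_assoc AP BP,
        simp add: diag flip: matrix_mul_assoc)
  then have "A ** B ** P ** matrix_inv P = B ** A ** P ** matrix_inv P" by simp
  then show ?thesis by (simp add: P matrix_inv_right flip: matrix_mul_assoc)
qed

lemma parabolic_common_fixed_vector_commute:
  fixes A B :: "real^2^2"
  assumes "trace A = 2" "trace B = 2" "v \<noteq> 0" "A *v v = v" "B *v v = v"
  shows "A ** B = B ** A"
proof -
  \<comment> \<open>the rows of A - 1 and B - 1 are all orthogonal to v, hence pairwise parallel\<close>
  have parallel: "x1 * y2 - x2 * y1 = 0"
    if "x1 * v$1 + x2 * v$2 = 0" "y1 * v$1 + y2 * v$2 = 0" for x1 x2 y1 y2
  proof -
    have "v$1 * (x1 * y2 - x2 * y1) = 0" "v$2 * (x1 * y2 - x2 * y1) = 0"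
      using that by algebra+
    then show ?thesis using assms(3) by (auto simp: vec2_eq_iff)
  qed
  have r: "(A$1$1 - 1) * v$1 + A$1$2 * v$2 = 0" "A$2$1 * v$1 + (A$2$2 - 1) * v$2 = 0"
    "(B$1$1 - 1) * v$1 + B$1$2 * v$2 = 0" "B$2$1 * v$1 + (B$2$2 - 1) * v$2 = 0"
    using assms(4,5) by (simp_all add: vec2_eq_iff matrix_vector_mult_2_nth algebra_simps)
  have "A$1$1 + A$2$2 = 2" "B$1$1 + B$2$2 = 2" using assms(1,2) by (simp_all add: trace_2)
  with parallel[OF r(1) r(4)] parallel[OF r(3) r(2)] parallel[OF r(1) r(3)] parallel[OF r(2) r(4)]
  have "A$1$2 * B$2$1 = B$1$2 * A$2$1"
    "A$1$1 * B$1$2 + A$1$2 * B$2$2 = B$1$1 * A$1$2 + B$1$2 * A$2$2"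
    "A$2$1 * B$1$1 + A$2$2 * B$2$1 = B$2$1 * A$1$1 + B$2$2 * A$2$1"
    by algebra+
  then show ?thesis by (simp add: mat2_eq_iff matrix_matrix_mult_2_nth algebra_simps)
qed

lemma commute_if_same_attr_pt_rep_pt:
  fixes A B :: "real^2^2"
  assumes "det A = 1" "det B = 1" "attr_pt A p" "attr_pt B p" "rep_pt A q" "rep_pt B q"
  shows "A ** B = B ** A"
proof -
  have "det (matrix_inv A) = 1" "det (matrix_inv B) = 1"
    using assms(1,2) by (simp_all add: det_matrix_inv)
  obtain v l where v: "v \<noteq> 0" "l \<ge> 1" "A *v v = l *\<^sub>R v" "p = proj_pt v"
      "l\<^sup>2 - trace A * l + 1 = 0"
    using attr_pt_eigenvector[OF assms(1,3)] by metis
  obtain v' k where v': "v' \<noteq> 0" "k \<ge> 1" "B *v v' = k *\<^sub>R v'" "p = proj_pt v'"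
      "k\<^sup>2 - trace B * k + 1 = 0"
    using attr_pt_eigenvector[OF assms(2,4)] by metis
  obtain w \<mu> where w: "w \<noteq> 0" "\<mu> \<ge> 1" "matrix_inv A *v w = \<mu> *\<^sub>R w" "q = proj_pt w"
    using attr_pt_eigenvector[OF \<open>det (matrix_inv A) = 1\<close>] assms(5) unfolding rep_pt_def by metis
  obtain w' \<nu> where w': "w' \<noteq> 0" "\<nu> \<ge> 1" "matrix_inv B *v w' = \<nu> *\<^sub>R w'" "q = proj_pt w'"
    using attr_pt_eigenvector[OF \<open>det (matrix_inv B) = 1\<close>] assms(6) unfolding rep_pt_def by metis
  have Bv: "B *v v = k *\<^sub>R v" using eigenvector_parallel[OF v(1) v'(1) _ v'(3)] v(4) v'(4) by simp
  have Aw: "A *v w = inverse \<mu> *\<^sub>R w" using eigenvector_matrix_inv[of A w \<mu>] w assms(1) by simp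
  have "B *v w' = inverse \<nu> *\<^sub>R w'" using eigenvector_matrix_inv[of B w' \<nu>] w' assms(2) by simp
  then have Bw: "B *v w = inverse \<nu> *\<^sub>R w"
    using eigenvector_parallel[OF w(1) w'(1)] w(4) w'(4) by simp
  show ?thesis
  proof (cases "cross2 v w = 0")
    case False
    then show ?thesis using commute_if_common_eigenbasis[OF v(3) Aw Bv Bw] by simp
  next
    case True
    \<comment> \<open>then v is an eigenvector both for l \<ge> 1 and for 1 / \<mu> \<le> 1\<close>
    then have pw: "proj_pt w = proj_pt v" using cross2_eq_0_imp_proj_pt_eq[OF v(1) w(1)] by simp
    have "l *\<^sub>R w = inverse \<mu> *\<^sub>R w" using eigenvector_parallel[OF w(1) v(1) pw v(3)] Aw by metis
    then have "l = 1" using w(1) v(2) w(2) by (simp add: scaleR_cancel_right one_le_inverse_iff)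
    have "k *\<^sub>R w = inverse \<nu> *\<^sub>R w" using eigenvector_parallel[OF w(1) v(1) pw Bv] Bw by metis
    then have "k = 1" using w(1) v'(2) w'(2) by (simp add: scaleR_cancel_right one_le_inverse_iff)
    show ?thesis
      using parabolic_common_fixed_vector_commute[OF _ _ v(1)] v(3,5) v'(5) Bv \<open>l = 1\<close> \<open>k = 1\<close>
      by simp
  qed
qed

section \<open>Simultaneous conjugation to nonnegative matrices\<close>

definition nonneg_matrix :: "'a::{zero,ord}^'n^'m \<Rightarrow> bool" where
  "nonneg_matrix M \<longleftrightarrow> (\<forall>i j. 0 \<le> M $ i $ j)"

lemma nonneg_matrix_2: "nonneg_matrix (M::real^2^2) \<longleftrightarrow> 0 \<le> M$1$1 \<and> 0 \<le> M$1$2 \<and> 0 \<le> M$2$1 \<and> 0 \<le> M$2$2"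
  by (simp add: nonneg_matrix_def forall_2)

lemma nonneg_matrix_transpose: "nonneg_matrix (transpose M) \<longleftrightarrow> nonneg_matrix M"
  by (auto simp: nonneg_matrix_def transpose_def)

lemma sl2_fraction_eq:
  fixes a b c d x t :: real
  assumes "a * d - b * c = 1" "c \<noteq> 0" "c * x + d = t"
  shows "(a * x + b) / (c * x + d) = (a * t - 1) / (c * t)"
proof -
  have "a * x + b = (a * (c * x) + b * c) / c" using assms(2) by (simp add: field_simps)
  also have "\<dots> = (a * t - 1) / c" using assms(1,3) by (simp add: algebra_simps flip: assms(3))
  finally show ?thesis using assms(3) by simp
qed

lemma sl2_halfline_test_point:
  fixes a b c d t :: real
  assumes det: "a * d - b * c = 1"
    and at_pos: "\<And>x. 0 \<le> x \<Longrightarrow> c * x + d \<noteq> 0 \<Longrightarrow> 0 \<le> (a * x + b) / (c * x + d)"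
    and "c \<noteq> 0" "t \<noteq> 0" "0 \<le> (t - d) / c"
  shows "0 \<le> (a * t - 1) / (c * t)"
  \<comment> \<open>(t - d) / c is the point where the denominator c x + d takes the value t\<close>
  using at_pos[OF assms(5)] sl2_fraction_eq[OF det assms(3), of "(t - d) / c" t] assms(3,4) by simp

lemma sl2_halfline_test_point_neg:
  fixes a b c d :: real
  assumes det: "a * d - b * c = 1"
    and at_pos: "\<And>x. 0 \<le> x \<Longrightarrow> c * x + d \<noteq> 0 \<Longrightarrow> 0 \<le> (a * x + b) / (c * x + d)"
    and "a * c > 0"
  shows "(1 / (2 * a) - d) / c < 0"
proof (rule ccontr)
  assume "\<not> (1 / (2 * a) - d) / c < 0"
  moreover have "a \<noteq> 0" "c \<noteq> 0" using assms(3) by auto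
  ultimately have "0 \<le> (a * (1 / (2 * a)) - 1) / (c * (1 / (2 * a)))"
    using sl2_halfline_test_point[OF det at_pos, of "1 / (2 * a)"] by simp
  also have "\<dots> = - (a / c)" using \<open>a \<noteq> 0\<close> \<open>c \<noteq> 0\<close> by (simp add: field_simps)
  finally show False using assms(3) by (auto simp: zero_less_mult_iff divide_le_0_iff)
qed

lemma sl2_halfline_invariant_diag_nonneg:
  fixes a b c d :: real
  assumes det: "a * d - b * c = 1" and tr: "a + d > 0"
    and at_infinity: "c \<noteq> 0 \<Longrightarrow> 0 \<le> a / c"
    and at_pos: "\<And>x. 0 \<le> x \<Longrightarrow> c * x + d \<noteq> 0 \<Longrightarrow> 0 \<le> (a * x + b) / (c * x + d)"
  shows "0 \<le> a" "0 \<le> d"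
proof -
  note key = sl2_halfline_test_point_neg[OF det at_pos]
  have c0: "a > 0 \<and> d > 0" if "c = 0"
  proof -
    have "0 < a * d" using det that by simp
    then show ?thesis using tr by (auto simp: zero_less_mult_iff)
  qed
  have ac: "0 \<le> a * c" if "c \<noteq> 0"
    using at_infinity[OF that] by (simp add: zero_le_divide_iff zero_le_mult_iff)
  show "0 \<le> a"
  proof (rule ccontr)
    assume "\<not> 0 \<le> a"
    then have "c < 0" using ac c0 by (fastforce simp: zero_le_mult_iff)
    then have "(1 / (2 * a) - d) / c < 0" using key \<open>\<not> 0 \<le> a\<close> by (simp add: mult_neg_neg)
    moreover have "1 / (2 * a) < 0" using \<open>\<not> 0 \<le> a\<close> by simp
    then have "1 / (2 * a) - d < 0" using \<open>\<not> 0 \<le> a\<close> tr by linarith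
    ultimately show False using \<open>c < 0\<close> by (simp add: divide_less_0_iff)
  qed
  show "0 \<le> d"
  proof (rule ccontr)
    assume "\<not> 0 \<le> d"
    then have "a > 0" using tr by simp
    then have "c > 0" using ac c0 \<open>\<not> 0 \<le> d\<close> by (fastforce simp: zero_le_mult_iff)
    then have "(1 / (2 * a) - d) / c < 0" using key \<open>a > 0\<close> by simp
    moreover have "1 / (2 * a) > 0" using \<open>a > 0\<close> by simp
    then have "1 / (2 * a) - d > 0" using \<open>\<not> 0 \<le> d\<close> by linarith
    ultimately show False using \<open>c > 0\<close> by (simp add: divide_less_0_iff)
  qed
qed

lemma sl2_nonneg_if_halfline_invariant:
  fixes a b c d :: real
  assumes det: "a * d - b * c = 1" and tr: "a + d > 0"
    and at_infinity: "c \<noteq> 0 \<Longrightarrow> 0 \<le> a / c"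
    and at_zero: "d \<noteq> 0 \<Longrightarrow> 0 \<le> b / d"
    and at_pos: "\<And>x. 0 \<le> x \<Longrightarrow> c * x + d \<noteq> 0 \<Longrightarrow> 0 \<le> (a * x + b) / (c * x + d)"
  shows "0 \<le> a \<and> 0 \<le> b \<and> 0 \<le> c \<and> 0 \<le> d"
proof -
  note a_d = sl2_halfline_invariant_diag_nonneg[OF det tr at_infinity at_pos]
  have c: "0 \<le> c"
  proof (rule ccontr)
    assume "\<not> 0 \<le> c"
    then have "a = 0" using at_infinity a_d(1) by (auto simp: zero_le_divide_iff)
    then have "d > 0" using tr by simp
    then have "0 \<le> (-1 - d) / c" using \<open>\<not> 0 \<le> c\<close> by (simp add: divide_nonpos_neg)
    then show False
      using sl2_halfline_test_point[OF det at_pos, of "-1"] \<open>\<not> 0 \<le> c\<close> \<open>a = 0\<close>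
      by (simp add: divide_less_0_iff)
  qed
  have b: "0 \<le> b"
  proof (rule ccontr)
    assume "\<not> 0 \<le> b"
    then have "d = 0" using at_zero a_d(2) by (fastforce simp: zero_le_divide_iff)
    then have "a > 0" "c > 0" using det tr c \<open>\<not> 0 \<le> b\<close> by (auto simp: less_le)
    then show False
      using sl2_halfline_test_point_neg[OF det at_pos] \<open>d = 0\<close> by (simp add: mult_less_0_iff)
  qed
  show ?thesis using a_d b c by simp
qed

lemma nonneg_matrix_if_halfline_invariant:
  fixes M :: "real^2^2"
  assumes "det M = 1" "trace M > 0" "mob M ` cint (Some 0) None \<subseteq> cint (Some 0) None"
  shows "nonneg_matrix M"
proof -
  obtain a b c d where M: "M = mat2 a b c d" using mat2_eta by metis
  have inv: "le_ext (Some 0) (mob M z)" if "le_ext (Some 0) z" for z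
    using assms(3) that by (auto simp: cint_def)
  have "0 \<le> a \<and> 0 \<le> b \<and> 0 \<le> c \<and> 0 \<le> d"
  proof (rule sl2_nonneg_if_halfline_invariant)
    show "a * d - b * c = 1" "a + d > 0" using assms(1,2) by (simp_all add: M det_2 trace_2)
    show "0 \<le> a / c" if "c \<noteq> 0" using inv[of None] that by (simp add: M mob_def)
    show "0 \<le> b / d" if "d \<noteq> 0" using inv[of "Some 0"] that by (simp add: M mob_def)
    show "0 \<le> (a * x + b) / (c * x + d)" if "0 \<le> x" "c * x + d \<noteq> 0" for x
      using inv[of "Some x"] that by (simp add: M mob_def)
  qed
  then show ?thesis by (simp add: M nonneg_matrix_2)
qed

lemma sl2_transitive_on_pairs:
  assumes "x \<noteq> y"
  obtains D :: "real^2^2" where "det D = 1" "mob D (Some 0) = x" "mob D None = y"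
proof -
  define s where "s = 1 / cross2 (lift_pt y) (lift_pt x)"
  define D where "D = mat2 (s * lift_pt y $ 1) (lift_pt x $ 1) (s * lift_pt y $ 2) (lift_pt x $ 2)"
  have "cross2 (lift_pt y) (lift_pt x) \<noteq> 0" using assms cross2_lift_pt_eq_0_iff by metis
  moreover have "det D = s * cross2 (lift_pt y) (lift_pt x)"
    by (simp add: D_def det_2 cross2_def algebra_simps)
  moreover have "D *v lift_pt None = s *\<^sub>R lift_pt y" "D *v lift_pt (Some 0) = lift_pt x"
    by (simp_all add: D_def vec2_eq_iff matrix_vector_mult_2_nth)
  ultimately show ?thesis using that[of D] by (simp add: s_def mob_eq_proj_pt proj_pt_scaleR)
qed

definition nonneg_conjugable :: "real^2^2 \<Rightarrow> real^2^2 \<Rightarrow> bool" where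
  "nonneg_conjugable A B \<longleftrightarrow>
     (\<exists>C :: real^2^2. det C = 1 \<and>
        nonneg_matrix (C ** A ** matrix_inv C) \<and> nonneg_matrix (C ** B ** matrix_inv C))"

lemma invariant_cint_imp_nonneg_conjugable:
  fixes A B :: "real^2^2"
  assumes "det A = 1" "det B = 1" "trace A > 0" "trace B > 0" "x \<noteq> y"
    and "mob A ` cint x y \<subseteq> cint x y" "mob B ` cint x y \<subseteq> cint x y"
  shows "nonneg_conjugable A B"
proof -
  obtain D :: "real^2^2" where D: "det D = 1" "mob D (Some 0) = x" "mob D None = y"
    using sl2_transitive_on_pairs[OF assms(5)] by metis
  define C where "C = matrix_inv D"
  have C: "det C = 1" "mob C x = Some 0" "mob C y = None"
    using D by (auto simp: C_def det_matrix_inv mob_matrix_inv_left)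
  have "nonneg_matrix (C ** M ** matrix_inv C)"
    if "det M = 1" "trace M > 0" "mob M ` cint x y \<subseteq> cint x y" for M
    using conj_invariant_cint[of C M x y] C that assms(5)
    by (intro nonneg_matrix_if_halfline_invariant) (simp_all add: det_conj trace_conj)
  then show ?thesis using C assms unfolding nonneg_conjugable_def by blast
qed

lemma interval_defined_imp_nonneg_conjugable:
  fixes A B :: "real^2^2"
  assumes "det A = 1" "det B = 1" "trace A > 0" "trace B > 0" "x \<noteq> y" "interval_defined A B x y"
  shows "nonneg_conjugable A B"
  using assms invariant_cint_imp_nonneg_conjugable[OF assms(1-4)] unfolding interval_defined_def
  by metis

definition quarter_turn :: "real^2^2" where
  "quarter_turn = mat2 0 1 (-1) 0"

lemma det_quarter_turn: "det quarter_turn = 1"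
  by (simp add: quarter_turn_def det_2)

lemma quarter_turn_conj_matrix_inv_sl2:
  fixes P :: "real^2^2"
  assumes "det P = 1"
  shows "quarter_turn ** matrix_inv P ** matrix_inv quarter_turn = transpose P"
  using assms det_quarter_turn
  by (simp add: matrix_inv_sl2 quarter_turn_def mat2_eq_iff matrix_matrix_mult_2_nth transpose_def)

lemma nonneg_conjugable_if_matrix_inv:
  fixes A B :: "real^2^2"
  assumes "det A = 1" "det B = 1" "nonneg_conjugable (matrix_inv A) (matrix_inv B)"
  shows "nonneg_conjugable A B"
proof -
  obtain C where C: "det C = 1" "nonneg_matrix (C ** matrix_inv A ** matrix_inv C)"
      "nonneg_matrix (C ** matrix_inv B ** matrix_inv C)"
    using assms(3) unfolding nonneg_conjugable_def by blast
  have transpose: "(quarter_turn ** C) ** M ** matrix_inv (quarter_turn ** C)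
      = transpose (C ** matrix_inv M ** matrix_inv C)" if "det M = 1" for M
  proof -
    have "det (C ** matrix_inv M ** matrix_inv C) = 1"
      using C(1) that by (simp add: det_conj det_matrix_inv)
    moreover have "C ** M ** matrix_inv C = matrix_inv (C ** matrix_inv M ** matrix_inv C)"
      using C(1) that by (simp add: matrix_inv_conj det_matrix_inv matrix_inv_inv)
    ultimately show ?thesis
      using C(1)
      by (simp add: det_quarter_turn quarter_turn_conj_matrix_inv_sl2 flip: conj_matrix_mul)
  qed
  show ?thesis
    unfolding nonneg_conjugable_def
    using C assms(1,2) transpose
    by (intro exI[of _ "quarter_turn ** C"])
      (simp add: det_mul det_quarter_turn nonneg_matrix_transpose)
qed

lemma nonneg_conjugable_matrix_inv_iff:
  fixes A B :: "real^2^2"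
  assumes "det A = 1" "det B = 1"
  shows "nonneg_conjugable (matrix_inv A) (matrix_inv B) \<longleftrightarrow> nonneg_conjugable A B"
  using nonneg_conjugable_if_matrix_inv[OF assms]
    nonneg_conjugable_if_matrix_inv[of "matrix_inv A" "matrix_inv B"] assms
  by (auto simp: det_matrix_inv matrix_inv_inv)

section \<open>Dynamics of nonnegative matrices\<close>

lemma le_ext_refl [simp]: "le_ext p p"
  by (cases p) simp_all

lemma le_ext_trans: "le_ext p q \<Longrightarrow> le_ext q r \<Longrightarrow> le_ext p r"
  by (cases p; cases q; cases r) simp_all

lemma le_ext_total: "le_ext p q \<or> le_ext q p"
  by (cases p; cases q) auto

lemma nonneg_sl2_denominator_pos:
  fixes a b c d x :: real
  assumes "0 \<le> a" "0 \<le> b" "0 \<le> c" "0 \<le> d" "a * d - b * c = 1" "0 \<le> x"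
  shows "c * x + d > 0"
proof -
  have "a * d > 0" using assms(2,3,5) by (smt (verit) mult_nonneg_nonneg)
  then have "d > 0" using assms(1,4) by (simp add: zero_less_mult_iff)
  then show ?thesis using assms(3,6) by (simp add: add_nonneg_pos)
qed

lemma mob_nonneg_sl2_Some:
  fixes a b c d x :: real
  assumes "0 \<le> a" "0 \<le> b" "0 \<le> c" "0 \<le> d" "a * d - b * c = 1" "0 \<le> x"
  shows "mob (mat2 a b c d) (Some x) = Some ((a * x + b) / (c * x + d))"
  using nonneg_sl2_denominator_pos[OF assms] by (simp add: mob_def)

lemma nonneg_sl2_mob_mono:
  fixes a b c d :: real
  assumes nonneg: "0 \<le> a" "0 \<le> b" "0 \<le> c" "0 \<le> d" and det: "a * d - b * c = 1"
    and "le_ext (Some 0) z" "le_ext z w"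
  shows "le_ext (mob (mat2 a b c d) z) (mob (mat2 a b c d) w)"
proof -
  note den = nonneg_sl2_denominator_pos[OF nonneg det] and mob = mob_nonneg_sl2_Some[OF nonneg det]
  show ?thesis
  proof (cases z)
    case None
    then show ?thesis using assms(7) by (cases w) simp_all
  next
    case (Some x)
    then have "0 \<le> x" using assms(6) by simp
    show ?thesis
    proof (cases w)
      case None
      have "(a * x + b) * c \<le> a * (c * x + d)" using det by (simp add: algebra_simps)
      then have "c \<noteq> 0 \<Longrightarrow> (a * x + b) / (c * x + d) \<le> a / c"
        using den[OF \<open>0 \<le> x\<close>] nonneg(3) by (simp add: divide_simps)
      then show ?thesis using None Some mob[OF \<open>0 \<le> x\<close>] by (simp add: mob_def)
    next
      case (Some y)
      then have "x \<le> y" "0 \<le> y" using assms(7) \<open>z = Some x\<close> \<open>0 \<le> x\<close> by simp_all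
      have "(a * y + b) * (c * x + d) - (a * x + b) * (c * y + d) = (a * d - b * c) * (y - x)"
        by algebra
      then have "(a * x + b) * (c * y + d) \<le> (a * y + b) * (c * x + d)" using det \<open>x \<le> y\<close> by simp
      then have "(a * x + b) / (c * x + d) \<le> (a * y + b) / (c * y + d)"
        using den[OF \<open>0 \<le> x\<close>] den[OF \<open>0 \<le> y\<close>] by (simp add: divide_simps)
      then show ?thesis using Some \<open>z = Some x\<close> mob \<open>0 \<le> x\<close> \<open>0 \<le> y\<close> by simp
    qed
  qed
qed

lemma nonneg_sl2_eigenvalue_ge_diag:
  fixes a b c d l :: real
  assumes "0 \<le> b" "0 \<le> c" "a * d - b * c = 1" "l \<ge> 1" "l\<^sup>2 - (a + d) * l + 1 = 0"
  shows "a \<le> l" "d \<le> l"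
proof -
  have prod: "(l - a) * (l - d) = b * c" using assms(3,5) by algebra
  have "(a + d) * l \<le> (2 * l) * l"
    using assms(4,5) mult_mono[of 1 l 1 l] by (simp add: power2_eq_square algebra_simps)
  then have "a + d \<le> 2 * l" using assms(4) by simp
  moreover have "0 \<le> (l - a) * (l - d)" using prod assms(1,2) by simp
  ultimately show "a \<le> l" "d \<le> l" by (auto simp: zero_le_mult_iff)
qed

lemma nonneg_sl2_attr_pt_cases:
  fixes a b c d :: real
  assumes nonneg: "0 \<le> a" "0 \<le> b" "0 \<le> c" "0 \<le> d" and det: "a * d - b * c = 1"
    and attr: "attr_pt (mat2 a b c d) p"
  obtains (infinity) "p = None" "c = 0" "d \<le> a"
    | (finite) \<pi> l where "p = Some \<pi>" "0 \<le> \<pi>" "a \<le> l" "c * \<pi> + d = l" "a * \<pi> + b = l * \<pi>"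
proof -
  have "det (mat2 a b c d) = 1" using det by (simp add: det_2)
  then obtain v l where v: "v \<noteq> 0" "l \<ge> 1" "mat2 a b c d *v v = l *\<^sub>R v" "p = proj_pt v"
      "l\<^sup>2 - (a + d) * l + 1 = 0"
    using attr_pt_eigenvector[OF _ attr] by (metis mat2_nth trace_2)
  have l: "a \<le> l" "d \<le> l" using nonneg_sl2_eigenvalue_ge_diag[OF nonneg(2,3) det v(2,5)] by simp_all
  have e1: "a * v$1 + b * v$2 = l * v$1" and e2: "c * v$1 + d * v$2 = l * v$2"
    using v(3) by (simp_all add: vec2_eq_iff matrix_vector_mult_2_nth)
  show ?thesis
  proof (cases "v$2 = 0")
    case True
    then have "v$1 \<noteq> 0" using v(1) by (simp add: vec2_eq_iff)
    then show ?thesis using infinity True e1 e2 l v(4) by (simp add: proj_pt_def)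
  next
    case False
    define \<pi> where "\<pi> = v$1 / v$2"
    have f1: "a * \<pi> + b = l * \<pi>" and f2: "c * \<pi> + d = l"
      using e1 e2 False unfolding \<pi>_def by (simp_all add: field_simps)
    have "0 \<le> \<pi>"
    proof (cases "c = 0")
      case False
      have "0 \<le> c * \<pi>" using f2 l(2) by simp
      then show ?thesis using False nonneg(3) by (simp add: zero_le_mult_iff)
    next
      case True
      then have "(l - a) * \<pi> = b" "l = d" using f1 f2 by (simp_all add: algebra_simps)
      moreover have "d \<noteq> a"
      proof
        assume "d = a"
        then have "a = 1" "b = 0" "d = 1"
          using det True nonneg(1) \<open>(l - a) * \<pi> = b\<close> \<open>l = d\<close> by (auto simp: square_eq_1_iff)
        then have "mat2 a b c d = mat 1" using True by (simp add: mat2_eq_iff mat_1_2_nth)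
        then show False using attr_pt_imp_neq_mat_1[OF attr] by simp
      qed
      ultimately have "0 < l - a" "0 \<le> (l - a) * \<pi>" using l(1) nonneg(2) by simp_all
      then show ?thesis by (simp add: zero_le_mult_iff)
    qed
    then show ?thesis using finite False f1 f2 l(1) v(4) by (simp add: proj_pt_def \<pi>_def)
  qed
qed

lemma sl2_displacement_sign:
  fixes a b c d l \<pi> x :: real
  assumes "0 \<le> c" "a \<le> l" "c * \<pi> + d = l" "a * \<pi> + b = l * \<pi>" "0 \<le> x" "c * x + d > 0"
  shows "x \<le> \<pi> \<Longrightarrow> x \<le> (a * x + b) / (c * x + d)"
    and "\<pi> \<le> x \<Longrightarrow> (a * x + b) / (c * x + d) \<le> x"
proof -
  have "x * (c * x + d) - (a * x + b) - (x - \<pi>) * (c * x + (l - a))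
      = x * (c * \<pi> + d - l) - (a * \<pi> + b - l * \<pi>)"
    by (simp add: algebra_simps)
  \<comment> \<open>the sign of x - M x is read off a factorisation through the fixed point \<pi>\<close>
  then have disp: "x * (c * x + d) - (a * x + b) = (x - \<pi>) * (c * x + (l - a))"
    using assms(3,4) by simp
  have factor: "0 \<le> c * x + (l - a)" using assms(1,2,5) by simp
  show "x \<le> (a * x + b) / (c * x + d)" if "x \<le> \<pi>"
  proof -
    have "x * (c * x + d) \<le> a * x + b"
      using disp mult_nonpos_nonneg[OF _ factor, of "x - \<pi>"] that by simp
    then show ?thesis using assms(6) by (simp add: le_divide_eq)
  qed
  show "(a * x + b) / (c * x + d) \<le> x" if "\<pi> \<le> x"
  proof -
    have "a * x + b \<le> x * (c * x + d)"
      using disp mult_nonneg_nonneg[OF _ factor, of "x - \<pi>"] that by simp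
    then show ?thesis using assms(6) by (simp add: divide_le_eq)
  qed
qed

lemma nonneg_sl2_attr_pt_dynamics:
  fixes M :: "real^2^2"
  assumes "nonneg_matrix M" "det M = 1" "attr_pt M p"
  shows "le_ext (Some 0) p"
    and "le_ext (Some 0) z \<Longrightarrow> le_ext z p \<Longrightarrow> le_ext z (mob M z)"
    and "le_ext p z \<Longrightarrow> le_ext (mob M z) z"
proof -
  obtain a b c d where M: "M = mat2 a b c d" using mat2_eta by metis
  have nonneg: "0 \<le> a" "0 \<le> b" "0 \<le> c" "0 \<le> d" and det: "a * d - b * c = 1"
    using assms(1,2) by (simp_all add: M nonneg_matrix_2 det_2)
  note den = nonneg_sl2_denominator_pos[OF nonneg det] and mob = mob_nonneg_sl2_Some[OF nonneg det]
  have "le_ext (Some 0) p \<and> (\<forall>z. le_ext (Some 0) z \<longrightarrow> le_ext z p \<longrightarrow> le_ext z (mob M z))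
      \<and> (\<forall>z. le_ext p z \<longrightarrow> le_ext (mob M z) z)"
  proof (rule nonneg_sl2_attr_pt_cases[OF nonneg det assms(3)[unfolded M]])
    assume infinity: "p = None" "c = 0" "d \<le> a"
    have "x \<le> (a * x + b) / (c * x + d)" if "0 \<le> x" for x
    proof -
      have "x * d \<le> x * a" using infinity(3) that by (simp add: mult_left_mono)
      then have "x * d \<le> a * x + b" using nonneg(2) by (simp add: mult.commute)
      then show ?thesis using den[OF that] infinity(2) by (simp add: le_divide_eq)
    qed
    moreover have "mob M None = None" using infinity(2) by (simp add: M mob_def)
    ultimately have "le_ext z (mob M z)" if "le_ext (Some 0) z" for z
      using that by (cases z) (auto simp: M mob)
    moreover have "le_ext (mob M z) z" if "le_ext None z" for z
      using that \<open>mob M None = None\<close> by (cases z) auto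
    ultimately show ?thesis using infinity(1) by simp
  next
    fix \<pi> l
    assume finite: "p = Some \<pi>" "0 \<le> \<pi>" "a \<le> l" "c * \<pi> + d = l" "a * \<pi> + b = l * \<pi>"
    note sign = sl2_displacement_sign[OF nonneg(3) finite(3-5) _ den]
    have "le_ext z (mob M z)" if "le_ext (Some 0) z" "le_ext z (Some \<pi>)" for z
      using that sign by (cases z) (auto simp: M mob)
    moreover have "le_ext (mob M z) z" if "le_ext (Some \<pi>) z" for z
      using that sign finite(2) by (cases z) (auto simp: M mob)
    ultimately show ?thesis using finite(1,2) by simp
  qed
  then show "le_ext (Some 0) p"
    and "le_ext (Some 0) z \<Longrightarrow> le_ext z p \<Longrightarrow> le_ext z (mob M z)"
    and "le_ext p z \<Longrightarrow> le_ext (mob M z) z"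
    by blast+
qed

lemma nonneg_sl2_invariant_interval_around_attr_pt:
  fixes M :: "real^2^2"
  assumes "nonneg_matrix M" "det M = 1" "attr_pt M r"
    and "le_ext (Some 0) p" "le_ext p r" "le_ext r q" "le_ext p z" "le_ext z q"
  shows "le_ext p (mob M z) \<and> le_ext (mob M z) q"
proof -
  obtain a b c d where M: "M = mat2 a b c d" using mat2_eta by metis
  have nonneg: "0 \<le> a" "0 \<le> b" "0 \<le> c" "0 \<le> d" and det: "a * d - b * c = 1"
    using assms(1,2) by (simp_all add: M nonneg_matrix_2 det_2)
  have mono: "le_ext (mob M u) (mob M w)" if "le_ext (Some 0) u" "le_ext u w" for u w
    using nonneg_sl2_mob_mono[OF nonneg det that] by (simp add: M)
  have "mob M r = r" using mob_attr_pt assms(2,3) by simp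
  note dyn = nonneg_sl2_attr_pt_dynamics[OF assms(1-3)]
  have z0: "le_ext (Some 0) z" using assms(4,7) le_ext_trans by blast
  show ?thesis
  proof (cases "le_ext z r")
    case True
    then show ?thesis
      using dyn(2)[OF z0] mono[OF z0 True] \<open>mob M r = r\<close> assms(6,7) le_ext_trans by metis
  next
    case False
    then have "le_ext r z" using le_ext_total by blast
    then show ?thesis
      using dyn(1,3) mono[OF dyn(1)] \<open>mob M r = r\<close> assms(5,8) le_ext_trans by metis
  qed
qed

lemma nonneg_sl2_cint_attr_pts_invariant:
  fixes M A B :: "real^2^2"
  assumes "nonneg_matrix A" "nonneg_matrix B" "det A = 1" "det B = 1"
    and "attr_pt A p" "attr_pt B q" "le_ext p q" "M \<in> {A, B}"
  shows "mob M ` cint p q \<subseteq> cint p q"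
proof -
  have "le_ext (Some 0) p" using nonneg_sl2_attr_pt_dynamics(1)[OF assms(1,3,5)] .
  then have "le_ext p (mob M z) \<and> le_ext (mob M z) q" if "le_ext p z" "le_ext z q" for z
    using assms that nonneg_sl2_invariant_interval_around_attr_pt le_ext_refl by blast
  then show ?thesis using assms(7) by (auto simp: cint_def)
qed

lemma nonneg_sl2_attracting_interval_defined:
  fixes A B :: "real^2^2"
  assumes "nonneg_matrix A" "nonneg_matrix B" "det A = 1" "det B = 1"
    and "trace A \<ge> 2" "trace B \<ge> 2" "A \<noteq> mat 1" "B \<noteq> mat 1"
  shows "attracting_interval_defined A B"
proof -
  obtain p q where "attr_pt A p" "attr_pt B q" using attr_pt_exists assms by metis
  moreover have "interval_defined A B p q"
    using le_ext_total[of p q]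
      nonneg_sl2_cint_attr_pts_invariant[OF assms(1-4) \<open>attr_pt A p\<close> \<open>attr_pt B q\<close>]
      nonneg_sl2_cint_attr_pts_invariant[OF assms(2,1,4,3) \<open>attr_pt B q\<close> \<open>attr_pt A p\<close>]
    unfolding interval_defined_def by blast
  ultimately show ?thesis unfolding attracting_interval_defined_def by blast
qed

lemma nonneg_conjugable_imp_attracting_interval_defined:
  fixes A B :: "real^2^2"
  assumes "det A = 1" "det B = 1" "trace A \<ge> 2" "trace B \<ge> 2" "A \<noteq> mat 1" "B \<noteq> mat 1"
    and "nonneg_conjugable A B"
  shows "attracting_interval_defined A B"
proof -
  obtain C where C: "det C = 1" "nonneg_matrix (C ** A ** matrix_inv C)"
      "nonneg_matrix (C ** B ** matrix_inv C)"
    using assms(7) unfolding nonneg_conjugable_def by blast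
  then have conj: "attracting_interval_defined (C ** A ** matrix_inv C) (C ** B ** matrix_inv C)"
    using assms(1-6)
    by (intro nonneg_sl2_attracting_interval_defined)
      (simp_all add: det_conj trace_conj conj_eq_mat_1_iff)
  have "attracting_interval_defined
      (matrix_inv C ** (C ** A ** matrix_inv C) ** matrix_inv (matrix_inv C))
      (matrix_inv C ** (C ** B ** matrix_inv C) ** matrix_inv (matrix_inv C))"
    by (rule attracting_interval_defined_conj)
      (use C(1) assms(1,2) conj in \<open>simp_all add: det_conj det_matrix_inv\<close>)
  moreover have "matrix_inv C ** (C ** M ** matrix_inv C) ** matrix_inv (matrix_inv C) = M" for M
    using C(1) conj_cancel[of C M] by (simp add: matrix_inv_inv)
  ultimately show ?thesis by simp
qed

section \<open>Coherent orientation\<close>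

lemma coherently_oriented_imp_nonneg_conjugable:
  fixes A B :: "real^2^2"
  assumes "det A = 1" "det B = 1" "A ** B \<noteq> B ** A" "trace A > 0" "trace B > 0"
    and "coherently_oriented A B"
  shows "nonneg_conjugable A B"
proof -
  obtain p q p' q' where pq: "attr_pt A p" "attr_pt B q" "interval_defined A B p q"
      and pq': "rep_pt A p'" "rep_pt B q'" "interval_defined (matrix_inv A) (matrix_inv B) p' q'"
    using assms(6) unfolding coherently_oriented_def by blast
  have "p \<noteq> q \<or> p' \<noteq> q'"
    using commute_if_same_attr_pt_rep_pt[OF assms(1,2) pq(1) _ pq'(1)] pq(2) pq'(2) assms(3)
    by blast
  then show ?thesis
  proof
    assume "p \<noteq> q"
    then show ?thesis using interval_defined_imp_nonneg_conjugable pq(3) assms by simp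
  next
    assume "p' \<noteq> q'"
    then have "nonneg_conjugable (matrix_inv A) (matrix_inv B)"
      using interval_defined_imp_nonneg_conjugable pq'(3) assms
      by (simp add: det_matrix_inv trace_matrix_inv_sl2)
    then show ?thesis using nonneg_conjugable_matrix_inv_iff assms(1,2) by simp
  qed
qed

lemma nonneg_conjugable_imp_coherently_oriented:
  fixes A B :: "real^2^2"
  assumes "det A = 1" "det B = 1" "trace A \<ge> 2" "trace B \<ge> 2" "A \<noteq> mat 1" "B \<noteq> mat 1"
    and "nonneg_conjugable A B"
  shows "coherently_oriented A B"
proof -
  have "nonneg_conjugable (matrix_inv A) (matrix_inv B)"
    using nonneg_conjugable_matrix_inv_iff assms(1,2,7) by simp
  then show ?thesis
    using nonneg_conjugable_imp_attracting_interval_defined assms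
    unfolding coherently_oriented_iff
    by (simp add: det_matrix_inv trace_matrix_inv_sl2 matrix_inv_eq_mat_1_iff)
qed

theorem lemma2p2:
  fixes A B :: "real^2^2"
  assumes "det A = 1" and "det B = 1"
    and "A ** B \<noteq> B ** A"
    and "trace A \<ge> 2" and "trace B \<ge> 2"
  shows "coherently_oriented A B \<longleftrightarrow>
    (\<exists>C :: real^2^2. det C = 1 \<and>
       (\<forall>i j. 0 \<le> (C ** A ** matrix_inv C) $ i $ j) \<and>
       (\<forall>i j. 0 \<le> (C ** B ** matrix_inv C) $ i $ j))"
proof -
  have "A \<noteq> mat 1" "B \<noteq> mat 1" using assms(3) by auto
  moreover have "trace A > 0" "trace B > 0" using assms(4,5) by simp_all
  ultimately have "coherently_oriented A B \<longleftrightarrow> nonneg_conjugable A B"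
    using coherently_oriented_imp_nonneg_conjugable nonneg_conjugable_imp_coherently_oriented assms
    by blast
  then show ?thesis unfolding nonneg_conjugable_def nonneg_matrix_def .
qed

end
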